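(* Let $f=(f_0,f_1)\in F\times F$ be such that $P_1^f\ll P_0^f$, and let $T$ be an anonymous comparison test that is error-free. Then $P_0^f(\{T(\cdot,f)=0\})<1$.
   Context: Let $\Omega=\{0,1\}$ and let $\Omega^\infty$ be the set of infinite sequences $\omega=(\omega_1,\omega_2,\dots)$ with $\omega_t\in\Omega$; $\omega^t=(\omega_1,\dots,\omega_t)$ denotes the prefix of length $t$ and also the cylinder set $\{\hat\omega\in\Omega^\infty:\hat\omega^t=\omega^t\}$. $\Omega^\infty$ carries the $\sigma$-algebra generated by all cylinders. $\Delta(\Omega)$ is the set of probability distributions on $\Omega$. A forecasting strategy is a function $f:\bigcup_{t\ge 0}(\Omega\times\Delta(\Omega)\times\Delta(\Omega))^t\to\Delta(\Omega)$; $F$ denotes the set of all forecasting strategies. For a pair $f=(f_0,f_1)\in F\times F$ and $\omega\in\Omega^\infty$, the play path $h=h(\omega,f_0,f_1)\in(\Omega\times\Delta(\Omega)\times\Delta(\Omega))^\infty$ is defined recursively by $h^0=\emptyset$ and $h^t=(h^{t-1},(\omega_t,f_0(h^{t-1}),f_1(h^{t-1})))$; $h^n$ denotes its prefix of length $n$ and $h_n$ its suffix starting at coordinate $n$. The pair $f$ induces probability measures $P_0^f,P_1^f$ on $\Omega^\infty$ determined by $P_i^f(\omega^t)=\prod_{n=1}^t f_i(h^{n-1}(\omega,f_0,f_1))[\omega_n]$. A comparison test is a function $T:\Omega^\infty\times F\times F\to\{0,\tfrac12,1\}$, measurable in $\omega$ for each fixed pair; $T=i\in\{0,1\}$ means expert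 $i$ is deemed better informed, $T=\tfrac12$ means inconclusive. Write $\{T(\cdot,f)=k\}=\{\omega: T(\omega,f_0,f_1)=k\}$. $T$ is anonymous if $T(\omega,f_0,f_1)=1-T(\omega,f_1,f_0)$ for all $\omega,f_0,f_1$. $T$ is error-free if for all $f\in F\times F$ and $i\in\{0,1\}$, $P_{1-i}^f(\{T(\cdot,f)=i\})=0$. *)

theory Defs
  imports "HOL-Probability.Probability"
begin

text \<open>Outcomes: \<Omega> = {0,1} is rendered as bool (False = 0, True = 1).
  Infinite sequences \<omega> = (\<omega>_1, \<omega>_2, ...) are functions nat => bool with
  \<omega>_t stored at index t - 1. Distributions on \<Omega> are bool pmf.\<close>

type_synonym outcome_seq = "nat \<Rightarrow> bool"
type_synonym hist = "(bool \<times> bool pmf \<times> bool pmf) list"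
type_synonym strategy = "hist \<Rightarrow> bool pmf"

definition cyl :: "outcome_seq \<Rightarrow> nat \<Rightarrow> outcome_seq set" where
  "cyl \<omega> t = {\<omega>'. \<forall>n<t. \<omega>' n = \<omega> n}"

definition Omega_inf :: "outcome_seq measure" where
  "Omega_inf = sigma UNIV {cyl \<omega> t | \<omega> t. True}"

fun play :: "outcome_seq \<Rightarrow> strategy \<Rightarrow> strategy \<Rightarrow> nat \<Rightarrow> hist" where
  "play \<omega> f0 f1 0 = []"
| "play \<omega> f0 f1 (Suc t) =
     (let h = play \<omega> f0 f1 t in h @ [(\<omega> t, f0 h, f1 h)])"

text \<open>P_i^f(\<omega>^t) = prod_{n=1}^t f_i(h^{n-1})[\<omega>_n]; i = False is expert 0, i = True expert 1.\<close>
definition cyl_prob :: "bool \<Rightarrow> strategy \<Rightarrow> strategy \<Rightarrow> outcome_seq \<Rightarrow> nat \<Rightarrow> real" where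
  "cyl_prob i f0 f1 \<omega> t =
     (\<Prod>n<t. pmf ((if i then f1 else f0) (play \<omega> f0 f1 n)) (\<omega> n))"

definition induced :: "bool \<Rightarrow> strategy \<Rightarrow> strategy \<Rightarrow> outcome_seq measure" where
  "induced i f0 f1 = (THE M. prob_space M \<and> sets M = sets Omega_inf \<and>
      (\<forall>\<omega> t. measure M (cyl \<omega> t) = cyl_prob i f0 f1 \<omega> t))"

abbreviation P0 :: "strategy \<Rightarrow> strategy \<Rightarrow> outcome_seq measure" where
  "P0 f0 f1 \<equiv> induced False f0 f1"
abbreviation P1 :: "strategy \<Rightarrow> strategy \<Rightarrow> outcome_seq measure" where
  "P1 f0 f1 \<equiv> induced True f0 f1"

type_synonym test = "outcome_seq \<Rightarrow> strategy \<Rightarrow> strategy \<Rightarrow> real"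

definition comparison_test :: "test \<Rightarrow> bool" where
  "comparison_test T \<longleftrightarrow>
     (\<forall>\<omega> f0 f1. T \<omega> f0 f1 \<in> {0, 1/2, 1}) \<and>
     (\<forall>f0 f1. {\<omega>. T \<omega> f0 f1 = 0} \<in> sets Omega_inf \<and>
              {\<omega>. T \<omega> f0 f1 = 1/2} \<in> sets Omega_inf \<and>
              {\<omega>. T \<omega> f0 f1 = 1} \<in> sets Omega_inf)"

definition anonymous :: "test \<Rightarrow> bool" where
  "anonymous T \<longleftrightarrow> (\<forall>\<omega> f0 f1. T \<omega> f0 f1 = 1 - T \<omega> f1 f0)"

definition error_free :: "test \<Rightarrow> bool" where
  "error_free T \<longleftrightarrow> (\<forall>f0 f1.
      measure (P1 f0 f1) {\<omega>. T \<omega> f0 f1 = 0} = 0 \<and>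
      measure (P0 f0 f1) {\<omega>. T \<omega> f0 f1 = 1} = 0)"

end

theory Submission
  imports Defs
begin

text \<open>If P_0 gave the event {T = 0} probability 1, absolute continuity would give it
  P_1-probability 1 as well, while error-freeness makes it P_1-null. The only real work is
  to know that P_0 and P_1 are probability measures on \<Omega>^\<infinity>, i.e. that the definite
  description defining them succeeds: uniqueness follows since the cylinders form an
  Int-stable generator, and existence by pushing Lebesgue measure on [0,1) forward along the
  quantile map that partitions [0,1) into consecutive intervals of length P(\<omega>^t).\<close>

lemma cylinders_subset_Pow: "{cyl \<omega> t | \<omega> t. True} \<subseteq> Pow UNIV"
  by auto

lemma sets_Omega_inf: "sets Omega_inf = sigma_sets UNIV {cyl \<omega> t | \<omega> t. True}"
  unfolding Omega_inf_def using cylinders_subset_Pow by simp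

lemma cyl_in_sets: "cyl \<omega> t \<in> sets Omega_inf"
  unfolding sets_Omega_inf by (rule sigma_sets.Basic) auto

lemma cyl_0 [simp]: "cyl \<omega> 0 = UNIV"
  by (simp add: cyl_def)

lemma cyl_Suc: "\<omega>' \<in> cyl \<omega> (Suc t) \<longleftrightarrow> \<omega>' \<in> cyl \<omega> t \<and> \<omega>' t = \<omega> t"
  by (auto simp: cyl_def less_Suc_eq)

lemma cyl_subset: "s \<le> t \<Longrightarrow> \<omega> \<in> cyl \<omega>' s \<Longrightarrow> cyl \<omega> t \<subseteq> cyl \<omega>' s"
  by (auto simp: cyl_def)

lemma cyl_disjoint: "s \<le> t \<Longrightarrow> \<omega> \<notin> cyl \<omega>' s \<Longrightarrow> cyl \<omega> t \<inter> cyl \<omega>' s = {}"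
  by (auto simp: cyl_def)

lemma Int_stable_cylinders: "Int_stable (insert {} {cyl \<omega> t | \<omega> t. True})"
proof -
  have "cyl \<omega> t \<inter> cyl \<omega>' s \<in> insert {} {cyl \<omega> t | \<omega> t. True}" for \<omega> \<omega>' t s
  proof (cases "s \<le> t")
    case True
    then show ?thesis
      using cyl_subset[of s t \<omega> \<omega>'] cyl_disjoint[of s t \<omega> \<omega>'] by (cases "\<omega> \<in> cyl \<omega>' s") auto
  next
    case False
    then show ?thesis
      using cyl_subset[of t s \<omega>' \<omega>] cyl_disjoint[of t s \<omega>' \<omega>]
      by (cases "\<omega>' \<in> cyl \<omega> t") (auto simp: Int_commute)
  qed
  then show ?thesis
    unfolding Int_stable_def by blast
qed

definition is_cylinder_measure :: "(outcome_seq \<Rightarrow> nat \<Rightarrow> real) \<Rightarrow> outcome_seq measure \<Rightarrow> bool" where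
  "is_cylinder_measure c M \<longleftrightarrow>
     prob_space M \<and> sets M = sets Omega_inf \<and> (\<forall>\<omega> t. measure M (cyl \<omega> t) = c \<omega> t)"

lemma cylinder_measure_unique:
  assumes M: "is_cylinder_measure c M" and N: "is_cylinder_measure c N"
  shows "M = N"
proof -
  let ?E = "insert {} {cyl \<omega> t | \<omega> t. True}"
  have fin: "finite_measure M" "finite_measure N"
    using M N by (auto simp: is_cylinder_measure_def prob_space_def)
  have sets_E: "sigma_sets UNIV ?E = sets Omega_inf"
    unfolding sets_Omega_inf by (rule sigma_sets_eqI) (auto intro: sigma_sets.Basic sigma_sets.Empty)
  show ?thesis
  proof (rule measure_eqI_generator_eq[where E = ?E and \<Omega> = UNIV and A = "\<lambda>_. UNIV"])
    fix X assume "X \<in> ?E"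
    then show "emeasure M X = emeasure N X"
      using M N by (auto simp: is_cylinder_measure_def fin[THEN finite_measure.emeasure_eq_measure])
  next
    show "emeasure M UNIV \<noteq> \<infinity>" for i :: nat
      using fin(1) by (simp add: finite_measure.emeasure_eq_measure)
  next
    show "range (\<lambda>_. UNIV) \<subseteq> ?E"
      using cyl_0 by blast
  qed (use Int_stable_cylinders M N sets_E in \<open>auto simp: is_cylinder_measure_def\<close>)
qed


definition nonanticipating :: "(outcome_seq \<Rightarrow> nat \<Rightarrow> 'a) \<Rightarrow> bool" where
  "nonanticipating g \<longleftrightarrow> (\<forall>\<omega> \<omega>' n. \<omega>' \<in> cyl \<omega> n \<longrightarrow> g \<omega>' n = g \<omega> n)"

lemma nonanticipatingD: "nonanticipating g \<Longrightarrow> \<omega>' \<in> cyl \<omega> n \<Longrightarrow> g \<omega>' n = g \<omega> n"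
  by (simp add: nonanticipating_def)

lemma nonanticipating_play: "nonanticipating (\<lambda>\<omega>. play \<omega> f0 f1)"
proof -
  have "\<omega>' \<in> cyl \<omega> n \<Longrightarrow> play \<omega>' f0 f1 n = play \<omega> f0 f1 n" for \<omega> \<omega>' n
    by (induction n) (auto simp: cyl_Suc)
  then show ?thesis
    by (simp add: nonanticipating_def)
qed

definition path_prob :: "(outcome_seq \<Rightarrow> nat \<Rightarrow> bool pmf) \<Rightarrow> outcome_seq \<Rightarrow> nat \<Rightarrow> real" where
  "path_prob q \<omega> t = (\<Prod>n<t. pmf (q \<omega> n) (\<omega> n))"

lemma cyl_prob_eq_path_prob:
  "cyl_prob i f0 f1 = path_prob (\<lambda>\<omega> n. (if i then f1 else f0) (play \<omega> f0 f1 n))"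
  by (simp add: fun_eq_iff cyl_prob_def path_prob_def)

lemma path_prob_0 [simp]: "path_prob q \<omega> 0 = 1"
  by (simp add: path_prob_def)

lemma path_prob_Suc: "path_prob q \<omega> (Suc t) = path_prob q \<omega> t * pmf (q \<omega> t) (\<omega> t)"
  by (simp add: path_prob_def)

lemma path_prob_nonneg: "0 \<le> path_prob q \<omega> t"
  by (simp add: path_prob_def prod_nonneg)

lemma nonanticipating_path_prob:
  assumes "nonanticipating q"
  shows "nonanticipating (path_prob q)"
proof -
  have "path_prob q \<omega>' t = path_prob q \<omega> t" if "\<omega>' \<in> cyl \<omega> t" for \<omega> \<omega>' t
  proof -
    have "q \<omega>' n = q \<omega> n" "\<omega>' n = \<omega> n" if "n < t" for n
      using nonanticipatingD[OF assms, of \<omega>' \<omega> n] \<open>\<omega>' \<in> cyl \<omega> t\<close> \<open>n < t\<close>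
      by (auto simp: cyl_def)
    then show ?thesis
      unfolding path_prob_def by (intro prod.cong) auto
  qed
  then show ?thesis
    by (simp add: nonanticipating_def)
qed

text \<open>Ordering the outcomes 0 < 1, the cylinder of \<omega>^t corresponds to the interval
  [path_lower q \<omega> t, path_lower q \<omega> t + path_prob q \<omega> t) of [0,1), which its next
  outcome splits at path_split q \<omega> t.\<close>

fun path_lower :: "(outcome_seq \<Rightarrow> nat \<Rightarrow> bool pmf) \<Rightarrow> outcome_seq \<Rightarrow> nat \<Rightarrow> real" where
  "path_lower q \<omega> 0 = 0"
| "path_lower q \<omega> (Suc t) =
     path_lower q \<omega> t + (if \<omega> t then path_prob q \<omega> t * pmf (q \<omega> t) False else 0)"

definition path_split :: "(outcome_seq \<Rightarrow> nat \<Rightarrow> bool pmf) \<Rightarrow> outcome_seq \<Rightarrow> nat \<Rightarrow> real" where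
  "path_split q \<omega> t = path_lower q \<omega> t + path_prob q \<omega> t * pmf (q \<omega> t) False"

definition path_interval :: "(outcome_seq \<Rightarrow> nat \<Rightarrow> bool pmf) \<Rightarrow> outcome_seq \<Rightarrow> nat \<Rightarrow> real set" where
  "path_interval q \<omega> t = {path_lower q \<omega> t ..< path_lower q \<omega> t + path_prob q \<omega> t}"

lemma nonanticipating_path_lower:
  assumes "nonanticipating q"
  shows "nonanticipating (path_lower q)"
proof -
  have "path_lower q \<omega>' t = path_lower q \<omega> t" if "\<omega>' \<in> cyl \<omega> t" for \<omega> \<omega>' t
    using that
  proof (induction t)
    case (Suc t)
    then have "\<omega>' \<in> cyl \<omega> t" "\<omega>' t = \<omega> t"
      by (simp_all add: cyl_Suc)
    then show ?case
      using Suc.IH nonanticipatingD[OF assms] nonanticipatingD[OF nonanticipating_path_prob[OF assms]]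
      by simp
  qed simp
  then show ?thesis
    by (simp add: nonanticipating_def)
qed

lemma nonanticipating_path_split:
  assumes "nonanticipating q"
  shows "nonanticipating (path_split q)"
  unfolding nonanticipating_def path_split_def
  using nonanticipatingD[OF assms] nonanticipatingD[OF nonanticipating_path_lower[OF assms]]
    nonanticipatingD[OF nonanticipating_path_prob[OF assms]]
  by metis

lemma path_split_between:
  "path_lower q \<omega> t \<le> path_split q \<omega> t"
  "path_split q \<omega> t \<le> path_lower q \<omega> t + path_prob q \<omega> t"
  using mult_left_le[OF pmf_le_1 path_prob_nonneg] path_prob_nonneg[of q \<omega> t]
  by (simp_all add: path_split_def)

lemma path_lower_Suc:
  "path_lower q \<omega> (Suc t) = (if \<omega> t then path_split q \<omega> t else path_lower q \<omega> t)"
  by (simp add: path_split_def)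

lemma path_upper_Suc:
  "path_lower q \<omega> (Suc t) + path_prob q \<omega> (Suc t) =
     (if \<omega> t then path_lower q \<omega> t + path_prob q \<omega> t else path_split q \<omega> t)"
  by (simp add: path_split_def path_prob_Suc pmf_False_conv_True right_diff_distrib)

lemma path_interval_Suc:
  "x \<in> path_interval q \<omega> (Suc t) \<longleftrightarrow>
     x \<in> path_interval q \<omega> t \<and> (\<omega> t \<longleftrightarrow> path_split q \<omega> t \<le> x)"
  using path_split_between[of q \<omega> t] path_upper_Suc[of q \<omega> t] path_lower_Suc[of q \<omega> t]
  unfolding path_interval_def atLeastLessThan_iff
  by auto

lemma path_interval_subset: "path_interval q \<omega> t \<subseteq> {0..<1}"
proof -
  have "0 \<le> path_lower q \<omega> t \<and> path_lower q \<omega> t + path_prob q \<omega> t \<le> 1"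
  proof (induction t)
    case (Suc t)
    then show ?case
      using path_split_between[of q \<omega> t] path_upper_Suc[of q \<omega> t] path_lower_Suc[of q \<omega> t]
      by auto
  qed simp
  then show ?thesis
    by (auto simp: path_interval_def)
qed

text \<open>The quantile map [0,1) \<rightarrow> \<Omega>^\<infinity>, read off digit by digit: the next outcome is 1
  exactly when x lies to the right of the current split point.\<close>

fun quantile_prefix :: "(outcome_seq \<Rightarrow> nat \<Rightarrow> bool pmf) \<Rightarrow> real \<Rightarrow> nat \<Rightarrow> outcome_seq" where
  "quantile_prefix q x 0 = (\<lambda>_. False)"
| "quantile_prefix q x (Suc n) =
     (let \<omega> = quantile_prefix q x n in fun_upd \<omega> n (path_split q \<omega> n \<le> x))"

definition quantile :: "(outcome_seq \<Rightarrow> nat \<Rightarrow> bool pmf) \<Rightarrow> real \<Rightarrow> outcome_seq" where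
  "quantile q x n = quantile_prefix q x (Suc n) n"

lemma quantile_prefix_eq: "k < n \<Longrightarrow> quantile_prefix q x n k = quantile q x k"
proof (induction n)
  case (Suc n)
  show ?case
  proof (cases "k < n")
    case True
    then show ?thesis
      using Suc.IH by (simp add: Let_def)
  next
    case False
    then have "k = n"
      using Suc.prems by simp
    then show ?thesis
      by (simp add: quantile_def)
  qed
qed simp

lemma quantile_digit:
  assumes "nonanticipating q"
  shows "quantile q x n \<longleftrightarrow> path_split q (quantile q x) n \<le> x"
proof -
  have "quantile q x \<in> cyl (quantile_prefix q x n) n"
    by (simp add: cyl_def quantile_prefix_eq)
  then show ?thesis
    using nonanticipatingD[OF nonanticipating_path_split[OF assms]]
    by (simp add: quantile_def Let_def)
qed

lemma quantile_in_cyl_iff: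
  assumes "nonanticipating q" "x \<in> {0..<1}"
  shows "quantile q x \<in> cyl \<omega> t \<longleftrightarrow> x \<in> path_interval q \<omega> t"
proof (induction t)
  case 0
  then show ?case
    using assms(2) by (simp add: path_interval_def)
next
  case (Suc t)
  have "path_split q (quantile q x) t = path_split q \<omega> t" if "quantile q x \<in> cyl \<omega> t"
    using nonanticipatingD[OF nonanticipating_path_split[OF assms(1)] that] .
  then show ?case
    using Suc quantile_digit[OF assms(1), of x t] by (auto simp: cyl_Suc path_interval_Suc)
qed

lemma cylinder_measure_exists:
  assumes "nonanticipating q"
  shows "\<exists>M. is_cylinder_measure (path_prob q) M"
proof -
  define U where "U = restrict_space lborel {0..<1::real}"
  have space_U: "space U = {0..<1}"
    by (simp add: U_def)
  have emeasure_U: "emeasure U A = emeasure lborel A" if "A \<subseteq> {0..<1}" for A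
    unfolding U_def using that by (intro emeasure_restrict_space) auto
  have "prob_space U"
    by (rule prob_spaceI) (simp add: space_U emeasure_U)
  have preimage: "quantile q -` cyl \<omega> t \<inter> space U = path_interval q \<omega> t" for \<omega> t
    using quantile_in_cyl_iff[OF assms] path_interval_subset[of q \<omega> t] by (auto simp: space_U)
  have "path_interval q \<omega> t \<in> sets U" for \<omega> t
    using path_interval_subset[of q \<omega> t]
    by (simp add: U_def sets_restrict_space_iff path_interval_def)
  then have "quantile q \<in> measurable U (measure_of UNIV {cyl \<omega> t | \<omega> t. True} (\<lambda>_. 0))"
    by (intro measurable_measure_of[OF cylinders_subset_Pow]) (auto simp: preimage)
  then have meas: "quantile q \<in> measurable U Omega_inf"
    by (simp add: Omega_inf_def)
  define M where "M = distr U Omega_inf (quantile q)"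
  have "emeasure M (cyl \<omega> t) = path_prob q \<omega> t" for \<omega> t
    using path_interval_subset[of q \<omega> t] path_prob_nonneg[of q \<omega> t]
    by (simp add: M_def emeasure_distr[OF meas cyl_in_sets] preimage emeasure_U path_interval_def)
  then have "is_cylinder_measure (path_prob q) M"
    using prob_space.prob_space_distr[OF \<open>prob_space U\<close> meas] path_prob_nonneg
    by (simp add: is_cylinder_measure_def M_def measure_def)
  then show ?thesis ..
qed

lemma is_cylinder_measure_induced:
  "is_cylinder_measure (cyl_prob i f0 f1) (induced i f0 f1)"
proof -
  have "nonanticipating (\<lambda>\<omega> n. (if i then f1 else f0) (play \<omega> f0 f1 n))"
    using nonanticipating_play by (simp add: nonanticipating_def)
  then have "\<exists>!M. is_cylinder_measure (cyl_prob i f0 f1) M"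
    unfolding cyl_prob_eq_path_prob
    using cylinder_measure_exists cylinder_measure_unique by blast
  then show ?thesis
    unfolding induced_def is_cylinder_measure_def[symmetric] by (rule theI')
qed

lemma prob_eq_1_absolutely_continuous:
  assumes "prob_space M" "prob_space N" "sets N = sets M" "absolutely_continuous M N"
    and "A \<in> sets M" "measure M A = 1"
  shows "measure N A = 1"
proof -
  have "AE x in M. x \<in> A"
    using prob_space.prob_eq_1[OF assms(1) assms(5)] assms(6) by simp
  then have "AE x in N. x \<in> A"
    using absolutely_continuous_AE[OF assms(3,4)] by simp
  then show ?thesis
    using prob_space.prob_eq_1[OF assms(2)] assms(3,5) by simp
qed

theorem mainTheorem1:
  fixes f0 f1 :: strategy and T :: test
  assumes "absolutely_continuous (P0 f0 f1) (P1 f0 f1)"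
    and "comparison_test T"
    and "anonymous T"
    and "error_free T"
  shows "measure (P0 f0 f1) {\<omega>. T \<omega> f0 f1 = 0} < 1"
proof (rule ccontr)
  let ?A = "{\<omega>. T \<omega> f0 f1 = 0}"
  assume "\<not> measure (P0 f0 f1) ?A < 1"
  have P0: "prob_space (P0 f0 f1)" "sets (P0 f0 f1) = sets Omega_inf"
    and P1: "prob_space (P1 f0 f1)" "sets (P1 f0 f1) = sets Omega_inf"
    using is_cylinder_measure_induced by (auto simp: is_cylinder_measure_def)
  have A: "?A \<in> sets (P0 f0 f1)"
    using assms(2) P0(2) by (simp add: comparison_test_def)
  have "measure (P0 f0 f1) ?A = 1"
    using \<open>\<not> measure (P0 f0 f1) ?A < 1\<close> prob_space.prob_le_1[OF P0(1), of ?A]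
    by linarith
  then have "measure (P1 f0 f1) ?A = 1"
    using prob_eq_1_absolutely_continuous[OF P0(1) P1(1) _ assms(1) A] P0(2) P1(2) by simp
  moreover have "measure (P1 f0 f1) ?A = 0"
    using assms(4) by (simp add: error_free_def)
  ultimately show False
    by simp
qed

end
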